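(* Let $G$ be a self-similar group generated by a finite symmetric set $S$ of states of a bounded automaton over the alphabet $X=\{0,1\}$, acting transitively on every level $X^n$ of the binary tree, and assume all tile graphs $\Gamma_n'$ of $G$ are connected. Then for every $n\ge1$ the covering $\pi:\Gamma_{n+1}\to\Gamma_n$, $\pi(ux)=u$, is normal with Galois group $\mathrm{Gal}(\Gamma_{n+1}|\Gamma_n)\cong\Psi_G\cong \mathbb Z/2\mathbb Z$.
   Context: Self-similar action: $g(xw)=g(x)\,g|_x(w)$ with $g|_x\in G$. Root permutation $\psi_g\in\mathrm{Sym}(X)$: $x\mapsto g(x)$; $\Psi_G=\langle\psi_s:s\in S\rangle$. A finite invertible automaton is bounded if the number of directed paths of length $n$ in its Moore diagram avoiding the trivial state is bounded independently of $n$. Schreier graph $\Gamma_n$: vertex set $X^n$, for each $v\in X^n$, $s\in S$ an edge joining $v$ and $s(v)$ (edges from $s$ at $v$ and $s^{-1}$ at $s(v)$ identified). Tile graph $\Gamma_n'$: spanning subgraph of $\Gamma_n$ with the edges $\{v,s(v)\}$ such that $s|_v=\mathbb 1$. A $d$-sheeted unramified covering $\pi:\widetilde Y\to Y$ (surjective, locally bijective on neighbourhoods, fibres of size $d$) is normal (Galois) if there are $d$ automorphisms $\sigma$ of $\widetilde Y$ with $\pi\circ\sigma=\pi$; they form the Galois group. *)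

theory Defs
  imports "HOL-Algebra.Elementary_Groups"
begin

section \<open>Automata over the binary alphabet X = {0,1} (0 = False, 1 = True)\<close>

fun act :: "('q \<Rightarrow> bool \<Rightarrow> 'q) \<Rightarrow> ('q \<Rightarrow> bool \<Rightarrow> bool) \<Rightarrow> 'q \<Rightarrow> bool list \<Rightarrow> bool list" where
  "act tau lam q [] = []"
| "act tau lam q (x # w) = lam q x # act tau lam (tau q x) w"

fun delta :: "('q \<Rightarrow> bool \<Rightarrow> 'q) \<Rightarrow> 'q \<Rightarrow> bool list \<Rightarrow> 'q" where
  "delta tau q [] = q"
| "delta tau q (x # w) = delta tau (tau q x) w"

definition trivial_state :: "('q \<Rightarrow> bool \<Rightarrow> 'q) \<Rightarrow> ('q \<Rightarrow> bool \<Rightarrow> bool) \<Rightarrow> 'q \<Rightarrow> bool" where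
  "trivial_state tau lam q \<longleftrightarrow> (\<forall>w. act tau lam q w = w)"

definition invertible_automaton :: "'q set \<Rightarrow> ('q \<Rightarrow> bool \<Rightarrow> 'q) \<Rightarrow> ('q \<Rightarrow> bool \<Rightarrow> bool) \<Rightarrow> bool" where
  "invertible_automaton Q tau lam \<longleftrightarrow>
     finite Q \<and> (\<forall>q\<in>Q. \<forall>x. tau q x \<in> Q) \<and> (\<forall>q\<in>Q. bij (lam q))"

text \<open>Directed paths of length n in the Moore diagram avoiding the trivial state:
  a start state q and an input word w of length n such that all n+1 visited states are nontrivial.\<close>

definition nontrivial_paths :: "'q set \<Rightarrow> ('q \<Rightarrow> bool \<Rightarrow> 'q) \<Rightarrow> ('q \<Rightarrow> bool \<Rightarrow> bool) \<Rightarrow> nat \<Rightarrow> ('q \<times> bool list) set" where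
  "nontrivial_paths Q tau lam n = {(q, w). q \<in> Q \<and> length w = n \<and>
      (\<forall>i\<le>n. \<not> trivial_state tau lam (delta tau q (take i w)))}"

definition bounded_automaton :: "'q set \<Rightarrow> ('q \<Rightarrow> bool \<Rightarrow> 'q) \<Rightarrow> ('q \<Rightarrow> bool \<Rightarrow> bool) \<Rightarrow> bool" where
  "bounded_automaton Q tau lam \<longleftrightarrow> invertible_automaton Q tau lam \<and>
     (\<exists>C. \<forall>n. card (nontrivial_paths Q tau lam n) \<le> C)"

text \<open>Section g|_v of a tree automorphism g at the word v: g(v w) = g(v) g|_v(w).\<close>
definition sec :: "(bool list \<Rightarrow> bool list) \<Rightarrow> bool list \<Rightarrow> (bool list \<Rightarrow> bool list)" where
  "sec g v = (\<lambda>w. drop (length v) (g (v @ w)))"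

inductive_set gen_group :: "(bool list \<Rightarrow> bool list) set \<Rightarrow> (bool list \<Rightarrow> bool list) set"
  for S where
  gen_id: "id \<in> gen_group S"
| gen_step: "s \<in> S \<Longrightarrow> g \<in> gen_group S \<Longrightarrow> s \<circ> g \<in> gen_group S"

definition self_similar :: "(bool list \<Rightarrow> bool list) set \<Rightarrow> bool" where
  "self_similar G \<longleftrightarrow> (\<forall>g\<in>G. \<forall>v. sec g v \<in> G)"

definition level_transitive :: "(bool list \<Rightarrow> bool list) set \<Rightarrow> bool" where
  "level_transitive G \<longleftrightarrow> (\<forall>u v. length u = length v \<longrightarrow> (\<exists>g\<in>G. g u = v))"

definition root_perm :: "(bool list \<Rightarrow> bool list) \<Rightarrow> bool \<Rightarrow> bool" where
  "root_perm g = (\<lambda>x. hd (g [x]))"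

inductive_set Psi_set :: "(bool list \<Rightarrow> bool list) set \<Rightarrow> (bool \<Rightarrow> bool) set"
  for S where
  psi_id: "id \<in> Psi_set S"
| psi_step: "s \<in> S \<Longrightarrow> p \<in> Psi_set S \<Longrightarrow> root_perm s \<circ> p \<in> Psi_set S"

definition Psi_group :: "(bool list \<Rightarrow> bool list) set \<Rightarrow> (bool \<Rightarrow> bool) monoid" where
  "Psi_group S = \<lparr>carrier = Psi_set S, mult = (\<circ>), one = id\<rparr>"

section \<open>Graphs with darts (edges = orbits of the involution rev; fixed points = semi-edges)\<close>

record ('v, 'd) dgraph =
  verts :: "'v set"
  darts :: "'d set"
  orig  :: "'d \<Rightarrow> 'v"
  rev   :: "'d \<Rightarrow> 'd"

definition schreier :: "(bool list \<Rightarrow> bool list) set \<Rightarrow> nat \<Rightarrow> (bool list, (bool list \<Rightarrow> bool list) \<times> bool list) dgraph" where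
  "schreier S n = \<lparr>verts = {w. length w = n}, darts = S \<times> {w. length w = n},
      orig = snd, rev = (\<lambda>(s, v). (inv_into UNIV s, s v))\<rparr>"

definition tile_edges :: "(bool list \<Rightarrow> bool list) set \<Rightarrow> nat \<Rightarrow> (bool list \<times> bool list) set" where
  "tile_edges S n = {(u, v). length u = n \<and> (\<exists>s\<in>S. s u = v \<and> sec s u = id)}"

definition tile_connected :: "(bool list \<Rightarrow> bool list) set \<Rightarrow> nat \<Rightarrow> bool" where
  "tile_connected S n \<longleftrightarrow>
     (\<forall>u v. length u = n \<longrightarrow> length v = n \<longrightarrow> (u, v) \<in> (tile_edges S n)\<^sup>*)"

definition is_covering :: "('v1, 'd1) dgraph \<Rightarrow> ('v2, 'd2) dgraph \<Rightarrow> ('v1 \<Rightarrow> 'v2) \<Rightarrow> ('d1 \<Rightarrow> 'd2) \<Rightarrow> nat \<Rightarrow> bool" where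
  "is_covering Y' Y pV pD d \<longleftrightarrow>
     pV \<in> verts Y' \<rightarrow> verts Y \<and> pD \<in> darts Y' \<rightarrow> darts Y \<and>
     pV ` verts Y' = verts Y \<and> pD ` darts Y' = darts Y \<and>
     (\<forall>e\<in>darts Y'. orig Y (pD e) = pV (orig Y' e) \<and> rev Y (pD e) = pD (rev Y' e)) \<and>
     (\<forall>v\<in>verts Y'. bij_betw pD {e\<in>darts Y'. orig Y' e = v} {e\<in>darts Y. orig Y e = pV v}) \<and>
     (\<forall>u\<in>verts Y. card {v\<in>verts Y'. pV v = u} = d)"

definition deck_transformations :: "('v1, 'd1) dgraph \<Rightarrow> ('v1 \<Rightarrow> 'v2) \<Rightarrow> ('d1 \<Rightarrow> 'd2) \<Rightarrow> (('v1 \<Rightarrow> 'v1) \<times> ('d1 \<Rightarrow> 'd1)) set" where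
  "deck_transformations Y' pV pD = {(f, g).
     f \<in> extensional (verts Y') \<and> g \<in> extensional (darts Y') \<and>
     bij_betw f (verts Y') (verts Y') \<and> bij_betw g (darts Y') (darts Y') \<and>
     (\<forall>e\<in>darts Y'. orig Y' (g e) = f (orig Y' e) \<and> rev Y' (g e) = g (rev Y' e)) \<and>
     (\<forall>v\<in>verts Y'. pV (f v) = pV v) \<and> (\<forall>e\<in>darts Y'. pD (g e) = pD e)}"

definition is_normal_covering :: "('v1, 'd1) dgraph \<Rightarrow> ('v2, 'd2) dgraph \<Rightarrow> ('v1 \<Rightarrow> 'v2) \<Rightarrow> ('d1 \<Rightarrow> 'd2) \<Rightarrow> nat \<Rightarrow> bool" where
  "is_normal_covering Y' Y pV pD d \<longleftrightarrow>
     is_covering Y' Y pV pD d \<and> card (deck_transformations Y' pV pD) = d"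

definition galois_group :: "('v1, 'd1) dgraph \<Rightarrow> ('v1 \<Rightarrow> 'v2) \<Rightarrow> ('d1 \<Rightarrow> 'd2) \<Rightarrow> (('v1 \<Rightarrow> 'v1) \<times> ('d1 \<Rightarrow> 'd1)) monoid" where
  "galois_group Y' pV pD = \<lparr>carrier = deck_transformations Y' pV pD,
      mult = (\<lambda>a b. (compose (verts Y') (fst a) (fst b), compose (darts Y') (snd a) (snd b))),
      one = (restrict id (verts Y'), restrict id (darts Y'))\<rparr>"

definition proj_V :: "bool list \<Rightarrow> bool list" where
  "proj_V w = butlast w"

definition proj_D :: "(bool list \<Rightarrow> bool list) \<times> bool list \<Rightarrow> (bool list \<Rightarrow> bool list) \<times> bool list" where
  "proj_D e = (fst e, butlast (snd e))"

end

theory Submission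
  imports Defs
begin

text \<open>Over the binary alphabet every state acts at each vertex either trivially or by swapping
  the two letters, so every element of \<open>G\<close> commutes with changing the last letter of a word.
  This change is therefore a nontrivial deck transformation of \<open>\<Gamma>\<^sub>n\<^sub>+\<^sub>1 \<rightarrow> \<Gamma>\<^sub>n\<close>. Conversely, a deck
  transformation commutes with the action of \<open>G\<close>, so by level transitivity it is determined by the
  image of a single vertex, which lies in a fibre of size two. Hence there are exactly two deck
  transformations. Similarly \<open>\<Psi>\<^sub>G\<close> consists of the two permutations of \<open>X\<close>, the transposition being
  the root permutation of any element of \<open>G\<close> mapping the word \<open>0\<close> to \<open>1\<close>.\<close>

text \<open>Setting \<open>flip_last [] = []\<close> makes \<open>flip_last\<close> a length-preserving involution commuting
  with every automaton state on all words.\<close>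

definition flip_last :: "bool list \<Rightarrow> bool list" where
  "flip_last w = (if w = [] then [] else butlast w @ [\<not> last w])"

lemma length_flip_last [simp]: "length (flip_last w) = length w"
  by (simp add: flip_last_def)

lemma butlast_flip_last [simp]: "butlast (flip_last w) = butlast w"
  by (simp add: flip_last_def)

lemma flip_last_flip_last [simp]: "flip_last (flip_last w) = w"
  by (simp add: flip_last_def)

lemma flip_last_neq: "w \<noteq> [] \<Longrightarrow> flip_last w \<noteq> w"
  by (simp add: flip_last_def) (metis append_butlast_last_id last_snoc)

lemma flip_last_singleton [simp]: "flip_last [x] = [\<not> x]"
  by (simp add: flip_last_def)

lemma butlast_eq_cases:
  assumes "length a = length b" and "b \<noteq> []" and "butlast a = butlast b"
  shows "a = b \<or> a = flip_last b"
proof -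
  have "a = butlast b @ [last a]" and "b = butlast b @ [last b]"
    using assms by (metis append_butlast_last_id length_0_conv)+
  then show ?thesis
    unfolding flip_last_def by (cases "last a = last b") auto
qed

lemma bij_bool_cases: "bij (f :: bool \<Rightarrow> bool) \<Longrightarrow> f = id \<or> f = Not"
  by (cases "f True"; cases "f False") (auto simp: fun_eq_iff bij_def inj_def)

lemma Not_commuting_cases:
  assumes "\<And>x. f (\<not> x) = (\<not> f x)"
  shows "f = id \<or> f = Not"
proof (cases "f False")
  case True
  then have "f x = (\<not> x)" for x
    using assms[of False] by (cases x) simp_all
  then show ?thesis
    by (simp add: fun_eq_iff)
next
  case False
  then have "f x = x" for x
    using assms[of False] by (cases x) simp_all
  then show ?thesis
    by (simp add: fun_eq_iff)
qed

lemma commuting_maps_agree: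
  assumes f: "\<And>k v. k \<in> K \<Longrightarrow> v \<in> V \<Longrightarrow> f (k v) = k (f v)"
    and h: "\<And>k v. k \<in> K \<Longrightarrow> v \<in> V \<Longrightarrow> h (k v) = k (h v)"
    and transitive: "\<And>v. v \<in> V \<Longrightarrow> \<exists>k\<in>K. k v\<^sub>0 = v"
    and "v\<^sub>0 \<in> V" and "f v\<^sub>0 = h v\<^sub>0" and "v \<in> V"
  shows "f v = h v"
proof -
  obtain k where "k \<in> K" and "k v\<^sub>0 = v"
    using transitive \<open>v \<in> V\<close> by blast
  then show ?thesis
    using f h \<open>v\<^sub>0 \<in> V\<close> \<open>f v\<^sub>0 = h v\<^sub>0\<close> by metis
qed

definition two_element_group :: "('a, 'b) monoid_scheme \<Rightarrow> 'a \<Rightarrow> bool" where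
  "two_element_group M a \<longleftrightarrow> carrier M = {\<one>\<^bsub>M\<^esub>, a} \<and> a \<noteq> \<one>\<^bsub>M\<^esub> \<and> a \<otimes>\<^bsub>M\<^esub> a = \<one>\<^bsub>M\<^esub> \<and>
     (\<forall>x\<in>carrier M. \<one>\<^bsub>M\<^esub> \<otimes>\<^bsub>M\<^esub> x = x \<and> x \<otimes>\<^bsub>M\<^esub> \<one>\<^bsub>M\<^esub> = x)"

lemma two_element_group_iso:
  assumes "two_element_group M a" and "two_element_group N b"
  shows "M \<cong> N"
proof (rule is_isoI)
  show "(\<lambda>x. if x = \<one>\<^bsub>M\<^esub> then \<one>\<^bsub>N\<^esub> else b) \<in> iso M N"
    using assms unfolding iso_def hom_def two_element_group_def bij_betw_def inj_on_def
    by auto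
qed

lemma two_element_group_integer_mod_group: "two_element_group (integer_mod_group 2) 1"
  by (auto simp: two_element_group_def carrier_integer_mod_group)

lemma card_two_element_group: "two_element_group M a \<Longrightarrow> card (carrier M) = 2"
  unfolding two_element_group_def by (auto simp: card_insert_if)

lemma length_act [simp]: "length (act tau lam q w) = length w"
  by (induction w arbitrary: q) auto

lemma act_append: "act tau lam q (u @ w) = act tau lam q u @ act tau lam (delta tau q u) w"
  by (induction u arbitrary: q) auto

lemma act_butlast: "act tau lam q (butlast w) = butlast (act tau lam q w)"
  by (cases w rule: rev_cases) (simp_all add: act_append)

lemma delta_closed: "q \<in> Q \<Longrightarrow> \<forall>q\<in>Q. \<forall>x. tau q x \<in> Q \<Longrightarrow> delta tau q u \<in> Q"
  by (induction u arbitrary: q) auto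

lemma act_flip_last:
  assumes "invertible_automaton Q tau lam" and "q \<in> Q"
  shows "act tau lam q (flip_last w) = flip_last (act tau lam q w)"
proof (cases w rule: rev_cases)
  case (snoc u x)
  have "delta tau q u \<in> Q"
    using assms by (intro delta_closed) (auto simp: invertible_automaton_def)
  then have "lam (delta tau q u) = id \<or> lam (delta tau q u) = Not"
    using assms(1) by (intro bij_bool_cases) (simp add: invertible_automaton_def)
  then show ?thesis
    by (auto simp: snoc flip_last_def act_append)
qed (simp add: flip_last_def)

lemma card_butlast_fibre:
  "length (u :: bool list) = n \<Longrightarrow> card {v. length v = Suc n \<and> butlast v = u} = 2"
proof -
  assume "length u = n"
  have "v \<in> range (\<lambda>x. u @ [x])" if "length v = Suc n" "butlast v = u" for v
    using that by (cases v rule: rev_cases) auto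
  with \<open>length u = n\<close> have "{v. length v = Suc n \<and> butlast v = u} = range (\<lambda>x. u @ [x])"
    by auto
  moreover have "inj (\<lambda>x. u @ [x])"
    by (simp add: inj_def)
  ultimately show ?thesis
    by (simp add: card_image)
qed

lemma schreier_covering:
  assumes butlast_S: "\<And>s w. s \<in> S \<Longrightarrow> s (butlast w) = butlast (s w)"
  shows "is_covering (schreier S (Suc n)) (schreier S n) proj_V proj_D 2"
proof -
  have star: "{e \<in> S \<times> {w. length w = m}. snd e = v} = S \<times> {v}" if "length v = m" for v m
    using that by (simp add: set_eq_iff mem_Times_iff) blast
  have star_bij: "bij_betw proj_D (S \<times> {v}) (S \<times> {butlast v})" for v
    unfolding bij_betw_def inj_on_def proj_D_def by force
  show ?thesis
    unfolding is_covering_def schreier_def dgraph.simps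
  proof (intro conjI)
    show "proj_V \<in> {w. length w = Suc n} \<rightarrow> {w. length w = n}"
      by (simp add: proj_V_def)
    show "proj_D \<in> S \<times> {w. length w = Suc n} \<rightarrow> S \<times> {w. length w = n}"
      by (auto simp: proj_D_def)
    show "proj_V ` {w. length w = Suc n} = {w. length w = n}"
      by (force simp: proj_V_def intro: image_eqI[where x = "_ @ [True]"])
    show "proj_D ` (S \<times> {w. length w = Suc n}) = S \<times> {w. length w = n}"
      by (force simp: proj_D_def intro: image_eqI[where x = "(_, _ @ [True])"])
    show "\<forall>e\<in>S \<times> {w. length w = Suc n}. snd (proj_D e) = proj_V (snd e) \<and>
        (case proj_D e of (s, v) \<Rightarrow> (inv_into UNIV s, s v)) =
        proj_D (case e of (s, v) \<Rightarrow> (inv_into UNIV s, s v))"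
      by (auto simp: proj_V_def proj_D_def butlast_S)
    show "\<forall>v\<in>{w. length w = Suc n}. bij_betw proj_D {e \<in> S \<times> {w. length w = Suc n}. snd e = v}
        {e \<in> S \<times> {w. length w = n}. snd e = proj_V v}"
      by (simp add: star proj_V_def star_bij)
    show "\<forall>u\<in>{w. length w = n}. card {v \<in> {w. length w = Suc n}. proj_V v = u} = 2"
      by (simp add: proj_V_def card_butlast_fibre)
  qed
qed

definition dgraph_restrict :: "('v, 'd) dgraph \<Rightarrow> ('v \<Rightarrow> 'v) \<Rightarrow> ('d \<Rightarrow> 'd) \<Rightarrow> ('v \<Rightarrow> 'v) \<times> ('d \<Rightarrow> 'd)" where
  "dgraph_restrict Y f g = (restrict f (verts Y), restrict g (darts Y))"

lemma carrier_galois_group: "carrier (galois_group Y pV pD) = deck_transformations Y pV pD"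
  by (simp add: galois_group_def)

lemma one_galois_group: "one (galois_group Y pV pD) = dgraph_restrict Y id id"
  by (simp add: galois_group_def dgraph_restrict_def)

lemma mult_galois_group_restrict:
  assumes "f' \<in> verts Y \<rightarrow> verts Y" and "g' \<in> darts Y \<rightarrow> darts Y"
  shows "mult (galois_group Y pV pD) (dgraph_restrict Y f g) (dgraph_restrict Y f' g') =
    dgraph_restrict Y (f \<circ> f') (g \<circ> g')"
  using assms by (auto simp: galois_group_def dgraph_restrict_def compose_def fun_eq_iff)

locale transitive_binary_generators =
  fixes S :: "(bool list \<Rightarrow> bool list) set"
  assumes length_gen [simp]: "s \<in> S \<Longrightarrow> length (s w) = length w"
    and flip_last_gen: "s \<in> S \<Longrightarrow> s (flip_last w) = flip_last (s w)"
    and inv_gen: "s \<in> S \<Longrightarrow> inv_into UNIV s \<in> S"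
    and level_transitive_gen: "level_transitive (gen_group S)"
begin

lemma length_gen_group [simp]: "k \<in> gen_group S \<Longrightarrow> length (k w) = length w"
  by (induction k rule: gen_group.induct) auto

lemma flip_last_gen_group: "k \<in> gen_group S \<Longrightarrow> k (flip_last w) = flip_last (k w)"
  by (induction k rule: gen_group.induct) (simp_all add: flip_last_gen)

context
  fixes f g m
  assumes deck: "(f, g) \<in> deck_transformations (schreier S m) proj_V proj_D"
begin

lemma deck_transformation_dart:
  assumes "e \<in> S \<times> {w. length w = m}"
  shows "g e = (fst e, f (snd e))"
proof -
  have "fst (g e) = fst e" and "snd (g e) = f (snd e)"
    using deck assms by (auto simp: deck_transformations_def schreier_def proj_D_def)
  then show ?thesis
    by (metis prod.collapse)
qed

text \<open>Compatibility with the reversal of the dart \<open>(s, v)\<close> into \<open>(s\<^sup>-\<^sup>1, s v)\<close> is exactly the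
  commutation of \<open>f\<close> with \<open>s\<close>.\<close>
lemma deck_transformation_commutes_gen:
  assumes "s \<in> S" and "length v = m"
  shows "f (s v) = s (f v)"
proof -
  have "rev (schreier S m) (g (s, v)) = g (rev (schreier S m) (s, v))"
    using deck assms by (auto simp: deck_transformations_def schreier_def)
  then show ?thesis
    using assms deck_transformation_dart inv_gen by (simp add: schreier_def)
qed

lemma deck_transformation_commutes_gen_group:
  "k \<in> gen_group S \<Longrightarrow> length v = m \<Longrightarrow> f (k v) = k (f v)"
  by (induction k rule: gen_group.induct) (simp_all add: deck_transformation_commutes_gen)

end

lemma deck_transformation_vertex_cases:
  assumes deck: "(f, g) \<in> deck_transformations (schreier S (Suc n)) proj_V proj_D"
  obtains "\<forall>v\<in>{w. length w = Suc n}. f v = v"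
    | "\<forall>v\<in>{w. length w = Suc n}. f v = flip_last v"
proof -
  define V where "V = {w :: bool list. length w = Suc n}"
  define v\<^sub>0 where "v\<^sub>0 = replicate (Suc n) False"
  have "v\<^sub>0 \<in> V" "v\<^sub>0 \<noteq> []"
    by (simp_all add: V_def v\<^sub>0_def)
  have "f v\<^sub>0 \<in> V" and "butlast (f v\<^sub>0) = butlast v\<^sub>0"
    using deck \<open>v\<^sub>0 \<in> V\<close>
    by (auto simp: deck_transformations_def schreier_def proj_V_def V_def bij_betw_def)
  then have f_v\<^sub>0: "f v\<^sub>0 = v\<^sub>0 \<or> f v\<^sub>0 = flip_last v\<^sub>0"
    using butlast_eq_cases \<open>v\<^sub>0 \<in> V\<close> \<open>v\<^sub>0 \<noteq> []\<close> by (simp add: V_def)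
  have transitive: "\<exists>k\<in>gen_group S. k v\<^sub>0 = v" if "v \<in> V" for v
    using level_transitive_gen that \<open>v\<^sub>0 \<in> V\<close> by (simp add: level_transitive_def V_def)
  have f_commutes: "f (k v) = k (f v)" if "k \<in> gen_group S" "v \<in> V" for k v
    using deck_transformation_commutes_gen_group[OF deck] that by (simp add: V_def)
  have flip_commutes: "flip_last (k v) = k (flip_last v)" if "k \<in> gen_group S" "v \<in> V" for k v
    using that flip_last_gen_group by simp
  have agree: "\<forall>v\<in>V. f v = h v"
    if "\<And>k v. k \<in> gen_group S \<Longrightarrow> v \<in> V \<Longrightarrow> h (k v) = k (h v)" and "f v\<^sub>0 = h v\<^sub>0" for h
    using commuting_maps_agree[OF f_commutes that(1) transitive \<open>v\<^sub>0 \<in> V\<close> that(2)] by blast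
  from f_v\<^sub>0 show thesis
  proof
    assume "f v\<^sub>0 = v\<^sub>0"
    then have "\<forall>v\<in>V. f v = id v"
      by (intro agree) simp_all
    with that(1) show thesis
      by (simp add: V_def)
  next
    assume "f v\<^sub>0 = flip_last v\<^sub>0"
    then have "\<forall>v\<in>V. f v = flip_last v"
      using agree flip_commutes by blast
    with that(2) show thesis
      by (simp add: V_def)
  qed
qed

lemma involution_deck_transformation:
  assumes closed: "\<And>v. length v = m \<Longrightarrow> length (h v) = m"
    and involutive: "\<And>v. length v = m \<Longrightarrow> h (h v) = v"
    and fibrewise: "\<And>v. length v = m \<Longrightarrow> butlast (h v) = butlast v"
    and commutes: "\<And>s v. s \<in> S \<Longrightarrow> length v = m \<Longrightarrow> h (s v) = s (h v)"
  shows "dgraph_restrict (schreier S m) h (apsnd h) \<in> deck_transformations (schreier S m) proj_V proj_D"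
  unfolding deck_transformations_def dgraph_restrict_def schreier_def dgraph.simps mem_Collect_eq prod.case
proof (intro conjI)
  show "bij_betw (restrict h {w. length w = m}) {w. length w = m} {w. length w = m}"
    by (simp, rule bij_betw_byWitness[where f' = h]) (auto simp: closed involutive)
  show "bij_betw (restrict (apsnd h) (S \<times> {w. length w = m})) (S \<times> {w. length w = m})
      (S \<times> {w. length w = m})"
    by (simp, rule bij_betw_byWitness[where f' = "apsnd h"]) (auto simp: closed involutive)
  show "\<forall>e\<in>S \<times> {w. length w = m}.
      snd (restrict (apsnd h) (S \<times> {w. length w = m}) e) = restrict h {w. length w = m} (snd e) \<and>
      (case restrict (apsnd h) (S \<times> {w. length w = m}) e of (s, v) \<Rightarrow> (inv_into UNIV s, s v)) =
      restrict (apsnd h) (S \<times> {w. length w = m}) (case e of (s, v) \<Rightarrow> (inv_into UNIV s, s v))"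
    by (auto simp: closed commutes inv_gen)
  show "\<forall>v\<in>{w. length w = m}. proj_V (restrict h {w. length w = m} v) = proj_V v"
    by (simp add: proj_V_def fibrewise)
  show "\<forall>e\<in>S \<times> {w. length w = m}. proj_D (restrict (apsnd h) (S \<times> {w. length w = m}) e) = proj_D e"
    by (auto simp: proj_D_def fibrewise)
qed simp_all

lemma deck_transformations_schreier:
  "deck_transformations (schreier S (Suc n)) proj_V proj_D =
    {dgraph_restrict (schreier S (Suc n)) id id,
     dgraph_restrict (schreier S (Suc n)) flip_last (apsnd flip_last)}"
  (is "?deck = {?id, ?flip}")
proof (intro equalityI subsetI)
  fix d assume "d \<in> ?deck"
  moreover obtain f g where d: "d = (f, g)"
    by fastforce
  ultimately have deck: "(f, g) \<in> ?deck"
    by simp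
  then have ext: "f \<in> extensional {w. length w = Suc n}" "g \<in> extensional (S \<times> {w. length w = Suc n})"
    by (simp_all add: deck_transformations_def schreier_def)
  moreover have "g = restrict (apsnd f) (S \<times> {w. length w = Suc n})"
    using ext(2) deck_transformation_dart[OF deck] by (auto simp: extensional_def)
  ultimately show "d \<in> {?id, ?flip}"
    by (cases rule: deck_transformation_vertex_cases[OF deck])
      (auto simp: d dgraph_restrict_def schreier_def extensional_def fun_eq_iff)
next
  have "?id \<in> ?deck"
    using involution_deck_transformation[where h = id and m = "Suc n"] by simp
  moreover have "?flip \<in> ?deck"
    by (rule involution_deck_transformation) (simp_all add: flip_last_gen)
  ultimately show "d \<in> {?id, ?flip} \<Longrightarrow> d \<in> ?deck" for d
    by blast
qed

lemma two_element_galois_group: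
  "two_element_group (galois_group (schreier S (Suc n)) proj_V proj_D)
     (dgraph_restrict (schreier S (Suc n)) flip_last (apsnd flip_last))"
proof -
  let ?Y = "schreier S (Suc n)"
  have verts: "verts ?Y = {w. length w = Suc n}" and darts: "darts ?Y = S \<times> {w. length w = Suc n}"
    by (simp_all add: schreier_def)
  have closed: "flip_last \<in> verts ?Y \<rightarrow> verts ?Y" "apsnd flip_last \<in> darts ?Y \<rightarrow> darts ?Y"
    "id \<in> verts ?Y \<rightarrow> verts ?Y" "id \<in> darts ?Y \<rightarrow> darts ?Y"
    by (auto simp: verts darts)
  have involution: "dgraph_restrict ?Y (flip_last \<circ> flip_last) (apsnd flip_last \<circ> apsnd flip_last) =
      dgraph_restrict ?Y id id"
    by (auto simp: dgraph_restrict_def verts darts intro!: restrict_ext)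
  obtain v :: "bool list" where "length v = Suc n"
    using Ex_list_of_length by blast
  moreover have "flip_last v \<noteq> v"
    using calculation by (intro flip_last_neq) auto
  ultimately have "restrict flip_last (verts ?Y) v \<noteq> restrict id (verts ?Y) v"
    by (simp add: verts)
  then have "dgraph_restrict ?Y flip_last (apsnd flip_last) \<noteq> dgraph_restrict ?Y id id"
    by (metis dgraph_restrict_def fst_conv)
  with involution show ?thesis
    by (auto simp: two_element_group_def one_galois_group mult_galois_group_restrict[OF closed(1,2)]
        mult_galois_group_restrict[OF closed(3,4)] deck_transformations_schreier carrier_galois_group)
qed

lemma singleton_gen [simp]: "s \<in> S \<Longrightarrow> s [x] = [root_perm s x]"
  using length_gen[of s "[x]"] by (cases "s [x]") (auto simp: root_perm_def)

lemma root_perm_gen: "s \<in> S \<Longrightarrow> root_perm s = id \<or> root_perm s = Not"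
  using flip_last_gen[of s "[x]" for x] by (intro Not_commuting_cases) simp

lemma gen_group_singleton: "k \<in> gen_group S \<Longrightarrow> \<exists>p\<in>Psi_set S. \<forall>x. k [x] = [p x]"
proof (induction k rule: gen_group.induct)
  case gen_id
  show ?case
    using Psi_set.psi_id by (intro bexI[of _ id]) simp_all
next
  case (gen_step s k)
  then obtain p where "p \<in> Psi_set S" and k: "\<And>x. k [x] = [p x]"
    by blast
  then have "root_perm s \<circ> p \<in> Psi_set S"
    using gen_step(1) by (intro Psi_set.psi_step)
  moreover have "(s \<circ> k) [x] = [(root_perm s \<circ> p) x]" for x
    using gen_step(1) by (simp add: k)
  ultimately show ?case
    by blast
qed

lemma Psi_set_eq: "Psi_set S = {id, Not}"
proof
  show "Psi_set S \<subseteq> {id, Not}"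
  proof
    fix p assume "p \<in> Psi_set S"
    then show "p \<in> {id, Not}"
    proof (induction p rule: Psi_set.induct)
      case (psi_step s p)
      have "Not \<circ> Not = id"
        by (simp add: fun_eq_iff)
      with root_perm_gen[OF psi_step(1)] psi_step.IH show ?case
        by auto
    qed simp
  qed
  moreover obtain k where "k \<in> gen_group S" and "k [False] = [True]"
    using level_transitive_gen unfolding level_transitive_def by (metis length_Cons)
  ultimately have "Not \<in> Psi_set S"
    using gen_group_singleton by fastforce
  then show "{id, Not} \<subseteq> Psi_set S"
    using Psi_set.psi_id by blast
qed

lemma two_element_Psi_group: "two_element_group (Psi_group S) Not"
  by (auto simp: two_element_group_def Psi_group_def Psi_set_eq fun_eq_iff)

end

lemma transitive_binary_generators_automaton:
  assumes "invertible_automaton Q tau lam" and "\<forall>s\<in>S. \<exists>q\<in>Q. s = act tau lam q"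
    and "\<forall>s\<in>S. inv_into UNIV s \<in> S" and "level_transitive (gen_group S)"
  shows "transitive_binary_generators S"
proof unfold_locales
  fix s w assume "s \<in> S"
  then obtain q where "q \<in> Q" and "s = act tau lam q"
    using assms(2) by blast
  then show "length (s w) = length w" and "s (flip_last w) = flip_last (s w)"
    using act_flip_last[OF assms(1)] by simp_all
qed (use assms in auto)

theorem corollary4p2:
  fixes Q :: "'q set" and tau :: "'q \<Rightarrow> bool \<Rightarrow> 'q" and lam :: "'q \<Rightarrow> bool \<Rightarrow> bool"
    and S :: "(bool list \<Rightarrow> bool list) set" and G :: "(bool list \<Rightarrow> bool list) set"
  assumes bounded: "bounded_automaton Q tau lam"
    and states: "\<forall>s\<in>S. \<exists>q\<in>Q. s = act tau lam q"
    and S_finite: "finite S"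
    and S_symm: "\<forall>s\<in>S. inv_into UNIV s \<in> S"
    and G_def: "G = gen_group S"
    and selfsim: "self_similar G"
    and transitive: "level_transitive G"
    and tiles: "\<forall>n. tile_connected S n"
  shows "\<forall>n\<ge>1.
           is_normal_covering (schreier S (n + 1)) (schreier S n) proj_V proj_D 2 \<and>
           galois_group (schreier S (n + 1)) proj_V proj_D \<cong> Psi_group S \<and>
           Psi_group S \<cong> integer_mod_group 2"
proof (intro allI impI)
  fix n :: nat
  interpret transitive_binary_generators S
    using bounded states S_symm transitive unfolding G_def bounded_automaton_def
    by (intro transitive_binary_generators_automaton) auto
  have "is_covering (schreier S (Suc n)) (schreier S n) proj_V proj_D 2"
    using states by (intro schreier_covering) (auto simp: act_butlast)
  moreover note galois = two_element_galois_group[of n]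
  moreover have "card (deck_transformations (schreier S (Suc n)) proj_V proj_D) = 2"
    using card_two_element_group[OF galois] by (simp add: carrier_galois_group)
  ultimately show "is_normal_covering (schreier S (n + 1)) (schreier S n) proj_V proj_D 2 \<and>
      galois_group (schreier S (n + 1)) proj_V proj_D \<cong> Psi_group S \<and>
      Psi_group S \<cong> integer_mod_group 2"
    using two_element_group_iso[OF galois two_element_Psi_group]
      two_element_group_iso[OF two_element_Psi_group two_element_group_integer_mod_group]
    by (simp add: is_normal_covering_def)
qed

end
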